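(* Let $(\mathcal X,R)$ be a quantum poset and let $\mathcal W$ be any quantum set. Then the relation $\sqsubseteq$ on the set $\mathbf{qSet}(\mathcal W,\mathcal X)$ of functions $\mathcal W\to\mathcal X$, defined by $F\sqsubseteq G$ iff $G\le R\circ F$, is a partial order (reflexive, transitive and antisymmetric).
   Context: A quantum set $\mathcal X$ is a set $\mathrm{At}(\mathcal X)$ of nonzero finite-dimensional Hilbert spaces, called its atoms. A (binary) relation $R$ from a quantum set $\mathcal X$ to a quantum set $\mathcal Y$ is a choice of a linear subspace $R(X,Y)\subseteq L(X,Y)$ for every $X\in\mathrm{At}(\mathcal X)$, $Y\in\mathrm{At}(\mathcal Y)$. Composition: $(S\circ R)(X,Z)=\mathrm{span}\{sr: r\in R(X,Y),\ s\in S(Y,Z),\ Y\in\mathrm{At}(\mathcal Y)\}$. Identity: $I_{\mathcal X}(X,X)=\mathbb C\cdot 1_X$ and $I_{\mathcal X}(X,X')=0$ for $X\ne X'$. Adjoint: $R^\dagger(Y,X)=\{r^\dagger : r\in R(X,Y)\}$. Order: $R\le S$ iff $R(X,Y)\subseteq S(X,Y)$ for all atoms $X,Y$; meets $\wedge$ (also infinite) are entrywise intersections. A function $F:\mathcal X\to\mathcal Y$ is a relation from $\mathcal X$ to $\mathcal Y$ with $F\circ F^\dagger\le I_{\mathcal Y}$ and $F^\dagger\circ F\ge I_{\mathcal X}$; quantum sets and functions form the category $\mathbf{qSet}$. A quantum poset is a pair $(\mathcal X,R)$ with $R$ a relation from $\mathcal X$ to $\mathcal X$ satisfying $I_{\mathcal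 X}\le R$, $R\circ R\le R$, and $R\wedge R^\dagger\le I_{\mathcal X}$. *)

theory Defs
  imports Complex_Main "Jordan_Normal_Form.Matrix"
begin

text \<open>A quantum set is given by an index set of atoms A together with a dimension
  function d; atom x is the Hilbert space of complex dimension d x (with its standard
  inner product). A linear map from atom x to atom y is a (d y) x (d x) complex matrix.\<close>

definition qset :: "'x set \<Rightarrow> ('x \<Rightarrow> nat) \<Rightarrow> bool" where
  "qset A d \<longleftrightarrow> (\<forall>x\<in>A. 0 < d x)"

definition is_subspace :: "nat \<Rightarrow> nat \<Rightarrow> complex mat set \<Rightarrow> bool" where
  "is_subspace n m V \<longleftrightarrow> V \<subseteq> carrier_mat n m \<and> 0\<^sub>m n m \<in> V
     \<and> (\<forall>a\<in>V. \<forall>b\<in>V. a + b \<in> V) \<and> (\<forall>c. \<forall>a\<in>V. c \<cdot>\<^sub>m a \<in> V)"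

definition cspan :: "nat \<Rightarrow> nat \<Rightarrow> complex mat set \<Rightarrow> complex mat set" where
  "cspan n m S = \<Inter>{V. is_subspace n m V \<and> S \<subseteq> V}"

definition adj :: "complex mat \<Rightarrow> complex mat" where
  "adj M = mat (dim_col M) (dim_row M) (\<lambda>(i,j). cnj (M $$ (j,i)))"

text \<open>A relation from (A,dA) to (B,dB): R x y is a subspace of L(x,y) for atoms
  x, y; off the atoms it is empty (so that equality of relations is entrywise equality
  on atoms).\<close>
definition qrel :: "'x set \<Rightarrow> ('x \<Rightarrow> nat) \<Rightarrow> 'y set \<Rightarrow> ('y \<Rightarrow> nat)
     \<Rightarrow> ('x \<Rightarrow> 'y \<Rightarrow> complex mat set) \<Rightarrow> bool" where
  "qrel A dA B dB R \<longleftrightarrow>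
     (\<forall>x\<in>A. \<forall>y\<in>B. is_subspace (dB y) (dA x) (R x y))
     \<and> (\<forall>x y. (x \<notin> A \<or> y \<notin> B) \<longrightarrow> R x y = {})"

definition qcomp :: "'x set \<Rightarrow> ('x \<Rightarrow> nat) \<Rightarrow> 'y set \<Rightarrow> 'z set \<Rightarrow> ('z \<Rightarrow> nat)
     \<Rightarrow> ('y \<Rightarrow> 'z \<Rightarrow> complex mat set) \<Rightarrow> ('x \<Rightarrow> 'y \<Rightarrow> complex mat set)
     \<Rightarrow> ('x \<Rightarrow> 'z \<Rightarrow> complex mat set)" where
  "qcomp A dA B C dC S R = (\<lambda>x z. if x \<in> A \<and> z \<in> C then
      cspan (dC z) (dA x) {s * r | s r y. y \<in> B \<and> r \<in> R x y \<and> s \<in> S y z} else {})"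

definition qid :: "'x set \<Rightarrow> ('x \<Rightarrow> nat) \<Rightarrow> ('x \<Rightarrow> 'x \<Rightarrow> complex mat set)" where
  "qid A d = (\<lambda>x x'. if x \<in> A \<and> x' \<in> A then
      (if x = x' then {c \<cdot>\<^sub>m 1\<^sub>m (d x) | c. True} else {0\<^sub>m (d x') (d x)}) else {})"

definition qadj :: "('x \<Rightarrow> 'y \<Rightarrow> complex mat set) \<Rightarrow> ('y \<Rightarrow> 'x \<Rightarrow> complex mat set)" where
  "qadj R = (\<lambda>y x. adj ` R x y)"

definition qle :: "'x set \<Rightarrow> 'y set \<Rightarrow> ('x \<Rightarrow> 'y \<Rightarrow> complex mat set)
     \<Rightarrow> ('x \<Rightarrow> 'y \<Rightarrow> complex mat set) \<Rightarrow> bool" where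
  "qle A B R S \<longleftrightarrow> (\<forall>x\<in>A. \<forall>y\<in>B. R x y \<subseteq> S x y)"

definition qmeet :: "('x \<Rightarrow> 'y \<Rightarrow> complex mat set) \<Rightarrow> ('x \<Rightarrow> 'y \<Rightarrow> complex mat set)
     \<Rightarrow> ('x \<Rightarrow> 'y \<Rightarrow> complex mat set)" where
  "qmeet R S = (\<lambda>x y. R x y \<inter> S x y)"

definition qfun :: "'x set \<Rightarrow> ('x \<Rightarrow> nat) \<Rightarrow> 'y set \<Rightarrow> ('y \<Rightarrow> nat)
     \<Rightarrow> ('x \<Rightarrow> 'y \<Rightarrow> complex mat set) \<Rightarrow> bool" where
  "qfun A dA B dB F \<longleftrightarrow> qrel A dA B dB F
     \<and> qle B B (qcomp B dB A B dB F (qadj F)) (qid B dB)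
     \<and> qle A A (qid A dA) (qcomp A dA B A dA (qadj F) F)"

definition qfuns :: "'x set \<Rightarrow> ('x \<Rightarrow> nat) \<Rightarrow> 'y set \<Rightarrow> ('y \<Rightarrow> nat)
     \<Rightarrow> ('x \<Rightarrow> 'y \<Rightarrow> complex mat set) set" where
  "qfuns A dA B dB = {F. qfun A dA B dB F}"

definition qposet :: "'x set \<Rightarrow> ('x \<Rightarrow> nat) \<Rightarrow> ('x \<Rightarrow> 'x \<Rightarrow> complex mat set) \<Rightarrow> bool" where
  "qposet A d R \<longleftrightarrow> qset A d \<and> qrel A d A d R
     \<and> qle A A (qid A d) R
     \<and> qle A A (qcomp A d A A d R R) R
     \<and> qle A A (qmeet R (qadj R)) (qid A d)"

definition fun_order :: "'w set \<Rightarrow> ('w \<Rightarrow> nat) \<Rightarrow> 'x set \<Rightarrow> ('x \<Rightarrow> nat)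
     \<Rightarrow> ('x \<Rightarrow> 'x \<Rightarrow> complex mat set)
     \<Rightarrow> (('w \<Rightarrow> 'x \<Rightarrow> complex mat set) \<times> ('w \<Rightarrow> 'x \<Rightarrow> complex mat set)) set" where
  "fun_order W dW X dX R = {(F, G). F \<in> qfuns W dW X dX \<and> G \<in> qfuns W dW X dX
       \<and> qle W X G (qcomp W dW X X dX R F)}"

end

theory Submission
  imports Defs
begin

text \<open>For a function F we have F \<circ> F\<dagger> \<le> I \<le> F\<dagger> \<circ> F, so for every relation T the
  inequality G \<le> T \<circ> F is equivalent to G \<circ> F\<dagger> \<le> T. Reflexivity and transitivity
  of \<sqsubseteq> then follow from I \<le> R and R \<circ> R \<le> R. For antisymmetry, F \<sqsubseteq> G \<sqsubseteq> F gives
  G \<circ> F\<dagger> \<le> R and F \<circ> G\<dagger> \<le> R, i.e. G \<circ> F\<dagger> \<le> R \<and> R\<dagger> \<le> I; hence G \<le> I \<circ> F = F,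
  and F \<le> G symmetrically.\<close>

lemma cspan_least: "is_subspace n m V \<Longrightarrow> S \<subseteq> V \<Longrightarrow> cspan n m S \<subseteq> V"
  unfolding cspan_def by blast

lemma cspan_superset: "S \<subseteq> cspan n m S"
  unfolding cspan_def by blast

lemma is_subspace_cspan:
  assumes "S \<subseteq> carrier_mat n m"
  shows "is_subspace n m (cspan n m S)"
proof -
  have "is_subspace n m (carrier_mat n m)"
    unfolding is_subspace_def by auto
  then have "cspan n m S \<subseteq> carrier_mat n m"
    using assms by (rule cspan_least)
  then show ?thesis
    unfolding is_subspace_def cspan_def by blast
qed

lemma is_subspace_carrier: "is_subspace n m V \<Longrightarrow> a \<in> V \<Longrightarrow> a \<in> carrier_mat n m"
  unfolding is_subspace_def by blast

lemma is_subspace_zero: "is_subspace n m V \<Longrightarrow> 0\<^sub>m n m \<in> V"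
  unfolding is_subspace_def by blast

lemma is_subspace_smult: "is_subspace n m V \<Longrightarrow> a \<in> V \<Longrightarrow> c \<cdot>\<^sub>m a \<in> V"
  unfolding is_subspace_def by blast

lemma mult_left_cspan_mem:
  assumes P: "P \<in> carrier_mat k n" and V: "is_subspace k m V"
    and S: "S \<subseteq> carrier_mat n m" and gen: "\<And>s. s \<in> S \<Longrightarrow> P * s \<in> V"
    and M: "M \<in> cspan n m S"
  shows "P * M \<in> V"
proof -
  let ?U = "{M \<in> carrier_mat n m. P * M \<in> V}"
  have "is_subspace n m ?U"
    using V P unfolding is_subspace_def
    by (auto simp: mult_add_distrib_mat[OF P] mult_smult_distrib[OF P])
  moreover have "S \<subseteq> ?U"
    using S gen by blast
  ultimately show ?thesis
    using cspan_least M by blast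
qed

lemma mult_right_cspan_mem:
  assumes P: "P \<in> carrier_mat m k" and V: "is_subspace n k V"
    and S: "S \<subseteq> carrier_mat n m" and gen: "\<And>s. s \<in> S \<Longrightarrow> s * P \<in> V"
    and M: "M \<in> cspan n m S"
  shows "M * P \<in> V"
proof -
  let ?U = "{M \<in> carrier_mat n m. M * P \<in> V}"
  have "is_subspace n m ?U"
    using V P unfolding is_subspace_def
    by (auto simp: add_mult_distrib_mat[OF _ _ P] mult_smult_assoc_mat[OF _ P])
  moreover have "S \<subseteq> ?U"
    using S gen by blast
  ultimately show ?thesis
    using cspan_least M by blast
qed

lemma adj_carrier_mat: "A \<in> carrier_mat n m \<Longrightarrow> adj A \<in> carrier_mat m n"
  unfolding adj_def carrier_mat_def by auto

lemma adj_adj: "adj (adj A) = A"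
  unfolding adj_def by (intro eq_matI) auto

lemma adj_mult:
  assumes "A \<in> carrier_mat n k" "B \<in> carrier_mat k m"
  shows "adj (A * B) = adj B * adj A"
  using assms unfolding adj_def
  by (intro eq_matI) (auto simp: scalar_prod_def mult.commute intro!: sum.cong)

lemma adj_zero: "adj (0\<^sub>m n m) = 0\<^sub>m m n"
  unfolding adj_def by (intro eq_matI) auto

lemma adj_add:
  assumes "A \<in> carrier_mat n m" "B \<in> carrier_mat n m"
  shows "adj (A + B) = adj A + adj B"
  using assms unfolding adj_def by (intro eq_matI) auto

lemma adj_smult: "adj (c \<cdot>\<^sub>m A) = cnj c \<cdot>\<^sub>m adj A"
  unfolding adj_def by (intro eq_matI) auto

lemma is_subspace_adj_image:
  assumes V: "is_subspace n m V"
  shows "is_subspace m n (adj ` V)"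
  unfolding is_subspace_def
proof (intro conjI ballI allI)
  show "adj ` V \<subseteq> carrier_mat m n"
    using V is_subspace_carrier adj_carrier_mat by blast
  show "0\<^sub>m m n \<in> adj ` V"
    using is_subspace_zero[OF V] adj_zero[of n m, symmetric] by blast
next
  fix a b assume "a \<in> adj ` V" "b \<in> adj ` V"
  then obtain a' b' where "a' \<in> V" "b' \<in> V" "a = adj a'" "b = adj b'"
    by blast
  moreover have "a' + b' \<in> V"
    using V \<open>a' \<in> V\<close> \<open>b' \<in> V\<close> unfolding is_subspace_def by blast
  ultimately show "a + b \<in> adj ` V"
    using adj_add is_subspace_carrier[OF V] by (metis image_eqI)
next
  fix c a assume "a \<in> adj ` V"
  then obtain a' where "a' \<in> V" "a = adj a'"
    by blast
  then show "c \<cdot>\<^sub>m a \<in> adj ` V"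
    using is_subspace_smult[OF V, of a' "cnj c"] adj_smult[of "cnj c" a']
    by (metis complex_cnj_cnj image_eqI)
qed

lemma qrel_subspace: "qrel A dA B dB R \<Longrightarrow> x \<in> A \<Longrightarrow> y \<in> B \<Longrightarrow> is_subspace (dB y) (dA x) (R x y)"
  unfolding qrel_def by blast

lemma qrel_carrier_mat:
  "qrel A dA B dB R \<Longrightarrow> x \<in> A \<Longrightarrow> y \<in> B \<Longrightarrow> r \<in> R x y \<Longrightarrow> r \<in> carrier_mat (dB y) (dA x)"
  using qrel_subspace is_subspace_carrier by metis

lemma qrel_eqI:
  assumes "qrel A dA B dB R" "qrel A dA B dB S" "qle A B R S" "qle A B S R"
  shows "R = S"
  using assms unfolding qrel_def qle_def by (intro ext) (metis subset_antisym)

lemma qleD: "qle A B R S \<Longrightarrow> x \<in> A \<Longrightarrow> y \<in> B \<Longrightarrow> m \<in> R x y \<Longrightarrow> m \<in> S x y"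
  unfolding qle_def by blast

lemma qle_trans: "qle A B R S \<Longrightarrow> qle A B S T \<Longrightarrow> qle A B R T"
  unfolding qle_def by blast

lemma qrel_qadj: "qrel A dA B dB R \<Longrightarrow> qrel B dB A dA (qadj R)"
  unfolding qrel_def qadj_def using is_subspace_adj_image by blast

lemma is_subspace_scalar_mats: "is_subspace n n {c \<cdot>\<^sub>m 1\<^sub>m n | c. True}"
proof -
  have "c \<cdot>\<^sub>m 1\<^sub>m n + e \<cdot>\<^sub>m 1\<^sub>m n = (c + e) \<cdot>\<^sub>m 1\<^sub>m n" for c e :: complex
    by (rule add_smult_distrib_right_mat[OF one_carrier_mat, symmetric])
  moreover have "e \<cdot>\<^sub>m (c \<cdot>\<^sub>m 1\<^sub>m n) = (e * c) \<cdot>\<^sub>m 1\<^sub>m n" for c e :: complex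
    by (intro eq_matI) auto
  moreover have "0\<^sub>m n n = (0::complex) \<cdot>\<^sub>m 1\<^sub>m n"
    by (intro eq_matI) auto
  ultimately show ?thesis
    unfolding is_subspace_def by auto
qed

lemma qrel_qid: "qrel A d A d (qid A d)"
  unfolding qrel_def qid_def
  using is_subspace_scalar_mats by (auto simp: is_subspace_def)

lemma one_mem_qid: "x \<in> A \<Longrightarrow> 1\<^sub>m (d x) \<in> qid A d x x"
  unfolding qid_def by (auto intro!: exI[of _ 1])

lemma qid_cases:
  assumes "M \<in> qid A d x y"
  obtains c where "x = y" "M = c \<cdot>\<^sub>m 1\<^sub>m (d x)" | "x \<noteq> y" "M = 0\<^sub>m (d y) (d x)"
  using assms unfolding qid_def by (auto split: if_splits)

lemma qcomp_on_atoms: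
  "x \<in> A \<Longrightarrow> z \<in> C \<Longrightarrow> qcomp A dA B C dC S R x z =
     cspan (dC z) (dA x) {s * r | s r y. y \<in> B \<and> r \<in> R x y \<and> s \<in> S y z}"
  unfolding qcomp_def by simp

lemma qcomp_generators_carrier_mat:
  assumes "qrel A dA B dB R" "qrel B dB C dC S" "x \<in> A" "z \<in> C"
  shows "{s * r | s r y. y \<in> B \<and> r \<in> R x y \<and> s \<in> S y z} \<subseteq> carrier_mat (dC z) (dA x)"
  using qrel_carrier_mat[OF assms(1) assms(3)] qrel_carrier_mat[OF assms(2) _ assms(4)] by fastforce

lemma qrel_qcomp:
  assumes "qrel A dA B dB R" "qrel B dB C dC S"
  shows "qrel A dA C dC (qcomp A dA B C dC S R)"
  unfolding qrel_def
proof (intro conjI ballI allI impI)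
  fix x z assume "x \<in> A" "z \<in> C"
  then show "is_subspace (dC z) (dA x) (qcomp A dA B C dC S R x z)"
    unfolding qcomp_on_atoms[OF \<open>x \<in> A\<close> \<open>z \<in> C\<close>]
    by (rule is_subspace_cspan[OF qcomp_generators_carrier_mat[OF assms]])
next
  fix x z assume "x \<notin> A \<or> z \<notin> C"
  then show "qcomp A dA B C dC S R x z = {}"
    unfolding qcomp_def by auto
qed

lemma qcomp_generator_mem:
  assumes "x \<in> A" "z \<in> C" "y \<in> B" "r \<in> R x y" "s \<in> S y z"
  shows "s * r \<in> qcomp A dA B C dC S R x z"
  unfolding qcomp_on_atoms[OF assms(1,2)]
  by (rule subsetD[OF cspan_superset]) (use assms(3-5) in blast)

lemma qcomp_least:
  assumes T: "qrel A dA C dC T"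
    and gen: "\<And>x y z r s. x \<in> A \<Longrightarrow> y \<in> B \<Longrightarrow> z \<in> C \<Longrightarrow> r \<in> R x y \<Longrightarrow> s \<in> S y z
           \<Longrightarrow> s * r \<in> T x z"
  shows "qle A C (qcomp A dA B C dC S R) T"
  unfolding qle_def
proof (intro ballI)
  fix x z assume x: "x \<in> A" and z: "z \<in> C"
  show "qcomp A dA B C dC S R x z \<subseteq> T x z"
    unfolding qcomp_on_atoms[OF x z]
    by (rule cspan_least[OF qrel_subspace[OF T x z]]) (use gen x z in blast)
qed

lemma mult_left_qcomp_mem:
  assumes "qrel A dA B dB R" "qrel B dB C dC S" "x \<in> A" "z \<in> C"
    and "M \<in> qcomp A dA B C dC S R x z" "P \<in> carrier_mat k (dC z)" "is_subspace k (dA x) V"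
    and "\<And>y r s. y \<in> B \<Longrightarrow> r \<in> R x y \<Longrightarrow> s \<in> S y z \<Longrightarrow> P * (s * r) \<in> V"
  shows "P * M \<in> V"
proof (rule mult_left_cspan_mem[OF assms(6,7) qcomp_generators_carrier_mat[OF assms(1-4)]])
  show "M \<in> cspan (dC z) (dA x) {s * r | s r y. y \<in> B \<and> r \<in> R x y \<and> s \<in> S y z}"
    using assms(5) unfolding qcomp_on_atoms[OF assms(3,4)] .
qed (use assms(8) in blast)

lemma mult_right_qcomp_mem:
  assumes "qrel A dA B dB R" "qrel B dB C dC S" "x \<in> A" "z \<in> C"
    and "M \<in> qcomp A dA B C dC S R x z" "P \<in> carrier_mat (dA x) k" "is_subspace (dC z) k V"
    and "\<And>y r s. y \<in> B \<Longrightarrow> r \<in> R x y \<Longrightarrow> s \<in> S y z \<Longrightarrow> (s * r) * P \<in> V"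
  shows "M * P \<in> V"
proof (rule mult_right_cspan_mem[OF assms(6,7) qcomp_generators_carrier_mat[OF assms(1-4)]])
  show "M \<in> cspan (dC z) (dA x) {s * r | s r y. y \<in> B \<and> r \<in> R x y \<and> s \<in> S y z}"
    using assms(5) unfolding qcomp_on_atoms[OF assms(3,4)] .
qed (use assms(8) in blast)

lemma qid_mult_mem:
  assumes R: "qrel A dA B dB R" and "x \<in> A" "y \<in> B" "z \<in> B"
    and i: "i \<in> qid B dB y z" and r: "r \<in> R x y"
  shows "i * r \<in> R x z"
proof -
  have rC: "r \<in> carrier_mat (dB y) (dA x)"
    using qrel_carrier_mat[OF R \<open>x \<in> A\<close> \<open>y \<in> B\<close> r] .
  from i show ?thesis
  proof (cases rule: qid_cases)
    case (1 c)
    then have "i * r = c \<cdot>\<^sub>m r"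
      using mult_smult_assoc_mat[OF one_carrier_mat rC] rC by simp
    then show ?thesis
      using 1 r is_subspace_smult[OF qrel_subspace[OF R \<open>x \<in> A\<close> \<open>y \<in> B\<close>]] by simp
  next
    case 2
    then show ?thesis
      using rC is_subspace_zero[OF qrel_subspace[OF R \<open>x \<in> A\<close> \<open>z \<in> B\<close>]] by simp
  qed
qed

lemma mult_qid_mem:
  assumes R: "qrel A dA B dB R" and "x \<in> A" "y \<in> A" "z \<in> B"
    and i: "i \<in> qid A dA x y" and s: "s \<in> R y z"
  shows "s * i \<in> R x z"
proof -
  have sC: "s \<in> carrier_mat (dB z) (dA y)"
    using qrel_carrier_mat[OF R \<open>y \<in> A\<close> \<open>z \<in> B\<close> s] .
  from i show ?thesis
  proof (cases rule: qid_cases)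
    case (1 c)
    then have "s * i = c \<cdot>\<^sub>m s"
      using mult_smult_distrib[OF sC one_carrier_mat] sC by simp
    then show ?thesis
      using 1 s is_subspace_smult[OF qrel_subspace[OF R \<open>y \<in> A\<close> \<open>z \<in> B\<close>]] by simp
  next
    case 2
    then show ?thesis
      using sC is_subspace_zero[OF qrel_subspace[OF R \<open>x \<in> A\<close> \<open>z \<in> B\<close>]] by simp
  qed
qed

lemma qcomp_qid_left_le: "qrel A dA B dB R \<Longrightarrow> qle A B (qcomp A dA B B dB (qid B dB) R) R"
  by (rule qcomp_least) (auto intro: qid_mult_mem)

lemma qfunD:
  assumes "qfun A dA B dB F"
  shows "qrel A dA B dB F" and "qle B B (qcomp B dB A B dB F (qadj F)) (qid B dB)"
    and "qle A A (qid A dA) (qcomp A dA B A dA (qadj F) F)"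
  using assms unfolding qfun_def by simp_all

lemma qfun_mult_adj_mem_qid:
  assumes F: "qfun W dW X dX F" and w: "w \<in> W" and y: "y \<in> X" and z: "z \<in> X"
    and r: "r \<in> F w z" and f: "f \<in> F w y"
  shows "r * adj f \<in> qid X dX y z"
proof -
  have af: "adj f \<in> qadj F y w"
    using f unfolding qadj_def by (rule imageI)
  have "r * adj f \<in> qcomp X dX W X dX F (qadj F) y z"
    using qcomp_generator_mem[where R = "qadj F" and S = F, OF y z w af r] .
  then show ?thesis
    by (rule qleD[OF qfunD(2)[OF F] y z])
qed

lemma qfun_one_mem:
  assumes F: "qfun W dW X dX F" and w: "w \<in> W"
  shows "1\<^sub>m (dW w) \<in> qcomp W dW X W dW (qadj F) F w w"
  by (rule qleD[OF qfunD(3)[OF F] w w one_mem_qid[OF w]])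

lemma mem_qcomp_qfun_iff:
  assumes F: "qfun W dW X dX F" and T: "qrel X dX Y dY T"
    and w: "w \<in> W" and x: "x \<in> Y" and g: "g \<in> carrier_mat (dY x) (dW w)"
  shows "g \<in> qcomp W dW X Y dY T F w x \<longleftrightarrow> (\<forall>y\<in>X. \<forall>f\<in>F w y. g * adj f \<in> T y x)"
proof (intro iffI ballI)
  note FR = qfunD(1)[OF F]
  fix y f assume gTF: "g \<in> qcomp W dW X Y dY T F w x" and y: "y \<in> X" and f: "f \<in> F w y"
  have fC: "adj f \<in> carrier_mat (dW w) (dX y)"
    using adj_carrier_mat[OF qrel_carrier_mat[OF FR w y f]] .
  show "g * adj f \<in> T y x"
  proof (rule mult_right_qcomp_mem[OF FR T w x gTF fC qrel_subspace[OF T y x]])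
    fix z r s assume z: "z \<in> X" and r: "r \<in> F w z" and s: "s \<in> T z x"
    have "(s * r) * adj f = s * (r * adj f)"
      using qrel_carrier_mat[OF T z x s] qrel_carrier_mat[OF FR w z r] fC by simp
    then show "(s * r) * adj f \<in> T y x"
      using mult_qid_mem[OF T y z x qfun_mult_adj_mem_qid[OF F w y z r f] s] by simp
  qed
next
  note FR = qfunD(1)[OF F]
  assume H: "\<forall>y\<in>X. \<forall>f\<in>F w y. g * adj f \<in> T y x"
  \<comment> \<open>Expand g = g * 1 along 1 \<in> F\<dagger> \<circ> F.\<close>
  have "g * 1\<^sub>m (dW w) \<in> qcomp W dW X Y dY T F w x"
  proof (rule mult_left_qcomp_mem[OF FR qrel_qadj[OF FR] w w qfun_one_mem[OF F w] g
        qrel_subspace[OF qrel_qcomp[OF FR T] w x]])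
    fix y r s assume y: "y \<in> X" and r: "r \<in> F w y" and s: "s \<in> qadj F y w"
    then obtain f where f: "f \<in> F w y" and sf: "s = adj f"
      unfolding qadj_def by blast
    have "g * (s * r) = (g * adj f) * r"
      using sf g adj_carrier_mat[OF qrel_carrier_mat[OF FR w y f]] qrel_carrier_mat[OF FR w y r]
      by simp
    then show "g * (s * r) \<in> qcomp W dW X Y dY T F w x"
      using qcomp_generator_mem[where R = F and S = T, OF w x y r] H y f by simp
  qed
  then show "g \<in> qcomp W dW X Y dY T F w x"
    using g by simp
qed

lemma qposetD:
  assumes "qposet A d R"
  shows "qrel A d A d R" and "qle A A (qid A d) R" and "qle A A (qcomp A d A A d R R) R"
    and "qle A A (qmeet R (qadj R)) (qid A d)"
  using assms unfolding qposet_def by simp_all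

lemma qposet_le_qcomp:
  assumes R: "qposet X dX R" and F: "qrel W dW X dX F"
  shows "qle W X F (qcomp W dW X X dX R F)"
  unfolding qle_def
proof (intro ballI subsetI)
  fix w x f assume w: "w \<in> W" and x: "x \<in> X" and f: "f \<in> F w x"
  have "1\<^sub>m (dX x) \<in> R x x"
    by (rule qleD[OF qposetD(2)[OF R] x x one_mem_qid[OF x]])
  then have "1\<^sub>m (dX x) * f \<in> qcomp W dW X X dX R F w x"
    by (rule qcomp_generator_mem[where R = F and S = R, OF w x x f])
  then show "f \<in> qcomp W dW X X dX R F w x"
    using qrel_carrier_mat[OF F w x f] by simp
qed

lemma qposet_qcomp_le_of_le_qcomp:
  assumes R: "qposet X dX R" and F: "qfun W dW X dX F" and G: "qrel W dW X dX G"
    and GF: "qle W X G (qcomp W dW X X dX R F)"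
  shows "qle W X (qcomp W dW X X dX R G) (qcomp W dW X X dX R F)"
proof (rule qcomp_least[OF qrel_qcomp[OF qfunD(1)[OF F] qposetD(1)[OF R]]])
  note RR = qposetD(1)[OF R]
  fix w z x g s assume w: "w \<in> W" and z: "z \<in> X" and x: "x \<in> X" and g: "g \<in> G w z"
    and s: "s \<in> R z x"
  have gC: "g \<in> carrier_mat (dX z) (dW w)" and sC: "s \<in> carrier_mat (dX x) (dX z)"
    using qrel_carrier_mat[OF G w z g] qrel_carrier_mat[OF RR z x s] .
  have "(s * g) * adj f \<in> R y x" if y: "y \<in> X" and f: "f \<in> F w y" for y f
  proof -
    have "g * adj f \<in> R y z"
      using qleD[OF GF w z g] mem_qcomp_qfun_iff[OF F RR w z gC] y f by blast
    then have "s * (g * adj f) \<in> R y x"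
      using qleD[OF qposetD(3)[OF R] y x qcomp_generator_mem[where R = R and S = R, OF y x z _ s]]
      by blast
    moreover have "(s * g) * adj f = s * (g * adj f)"
      using sC gC adj_carrier_mat[OF qrel_carrier_mat[OF qfunD(1)[OF F] w y f]] by simp
    ultimately show ?thesis
      by simp
  qed
  then show "s * g \<in> qcomp W dW X X dX R F w x"
    using mem_qcomp_qfun_iff[OF F RR w x] sC gC by simp
qed

lemma qposet_qle_of_le_qcomp_both:
  assumes R: "qposet X dX R" and F: "qfun W dW X dX F" and G: "qfun W dW X dX G"
    and GF: "qle W X G (qcomp W dW X X dX R F)" and FG: "qle W X F (qcomp W dW X X dX R G)"
  shows "qle W X G F"
  unfolding qle_def
proof (intro ballI subsetI)
  note RR = qposetD(1)[OF R] and FR = qfunD(1)[OF F] and GR = qfunD(1)[OF G]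
  fix w x g assume w: "w \<in> W" and x: "x \<in> X" and g: "g \<in> G w x"
  have gC: "g \<in> carrier_mat (dX x) (dW w)"
    by (rule qrel_carrier_mat[OF GR w x g])
  have "g * adj f \<in> qid X dX y x" if y: "y \<in> X" and f: "f \<in> F w y" for y f
  proof -
    have fC: "f \<in> carrier_mat (dX y) (dW w)"
      by (rule qrel_carrier_mat[OF FR w y f])
    have "g * adj f \<in> R y x"
      using qleD[OF GF w x g] mem_qcomp_qfun_iff[OF F RR w x gC] y f by blast
    moreover have "f * adj g \<in> R x y"
      using qleD[OF FG w y f] mem_qcomp_qfun_iff[OF G RR w y fC] x g by blast
    then have "g * adj f \<in> qadj R y x"
      unfolding qadj_def using adj_mult[OF fC adj_carrier_mat[OF gC]] adj_adj by (metis image_eqI)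
    ultimately show ?thesis
      using qleD[OF qposetD(4)[OF R] y x] unfolding qmeet_def by blast
  qed
  then have "g \<in> qcomp W dW X X dX (qid X dX) F w x"
    using mem_qcomp_qfun_iff[OF F qrel_qid w x gC] by blast
  then show "g \<in> F w x"
    by (rule qleD[OF qcomp_qid_left_le[OF FR] w x])
qed

theorem mainTheorem1:
  fixes X :: "'x set" and dX :: "'x \<Rightarrow> nat" and R :: "'x \<Rightarrow> 'x \<Rightarrow> complex mat set"
    and W :: "'w set" and dW :: "'w \<Rightarrow> nat"
  assumes "qposet X dX R"
    and "qset W dW"
  shows "partial_order_on (qfuns W dW X dX) (fun_order W dW X dX R)"
  unfolding partial_order_on_def preorder_on_def
proof (intro conjI)
  note R = assms(1)
  show "fun_order W dW X dX R \<subseteq> qfuns W dW X dX \<times> qfuns W dW X dX"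
    unfolding fun_order_def by blast
  show "refl_on (qfuns W dW X dX) (fun_order W dW X dX R)"
    unfolding refl_on_def fun_order_def qfuns_def
    using qposet_le_qcomp[OF R qfunD(1)] by blast
  show "trans (fun_order W dW X dX R)"
    unfolding trans_def fun_order_def qfuns_def
    using qle_trans qposet_qcomp_le_of_le_qcomp[OF R _ qfunD(1)] by blast
  show "antisym (fun_order W dW X dX R)"
    unfolding antisym_def fun_order_def qfuns_def
    using qposet_qle_of_le_qcomp_both[OF R] qrel_eqI[OF qfunD(1) qfunD(1)] by blast
qed

end
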